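(* Consider the system $$\frac{dx_1}{dt}=x_1\Big[r_1\Big(1-\frac{x_1}{K_1}\Big)-\frac{a x_2}{1+h a x_1}\Big],\qquad \frac{dx_2}{dt}=x_2\Big[\frac{e a x_1}{1+h a x_1}-d+r_2\Big(1-\frac{x_2}{K_2}\Big)\Big]$$ on $X=\mathbb R^2_+$, with constants $r_1,r_2,K_1,K_2,a,h,e>0$ and $d\ge0$. Then: (i) the host $x_1$ is persistent in $X$ if $d>r_2$ or $\frac{r_1}{a}>K_2\big(1-\frac{d}{r_2}\big)>0$; (ii) the parasite $x_2$ is persistent in $X$ if $r_2+\frac{eaK_1}{1+ahK_1}>d$; (iii) the system is permanent in $X$ if either $r_2+\frac{eaK_1}{1+ahK_1}>d>r_2$ or $\frac{r_1}{a}>K_2\big(1-\frac{d}{r_2}\big)>0$.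
   Context: A species $x_i$ is persistent if there is $\varepsilon>0$ such that $\liminf_{t\to\infty}x_i(t)\ge\varepsilon$ for every solution with $x_1(0)>0$ and $x_2(0)>0$; the system is permanent if both species are persistent. *)

theory Defs
  imports "HOL-Analysis.Analysis"
begin

definition hp_solution ::
  "real \<Rightarrow> real \<Rightarrow> real \<Rightarrow> real \<Rightarrow> real \<Rightarrow> real \<Rightarrow> real \<Rightarrow> real
   \<Rightarrow> (real \<Rightarrow> real) \<Rightarrow> (real \<Rightarrow> real) \<Rightarrow> bool" where
  "hp_solution r1 r2 K1 K2 a h e d x1 x2 \<longleftrightarrow>
     (\<forall>t\<ge>0.
        (x1 has_real_derivative
           (x1 t * (r1 * (1 - x1 t / K1) - a * x2 t / (1 + h * a * x1 t))))
           (at t within {0..}) \<and>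
        (x2 has_real_derivative
           (x2 t * (e * a * x1 t / (1 + h * a * x1 t) - d + r2 * (1 - x2 t / K2))))
           (at t within {0..}))"

definition species :: "nat \<Rightarrow> (real \<Rightarrow> real) \<Rightarrow> (real \<Rightarrow> real) \<Rightarrow> real \<Rightarrow> real" where
  "species i x1 x2 = (if i = 1 then x1 else x2)"

definition persistent ::
  "((real \<Rightarrow> real) \<Rightarrow> (real \<Rightarrow> real) \<Rightarrow> bool) \<Rightarrow> nat \<Rightarrow> bool" where
  "persistent sol i \<longleftrightarrow>
     (\<exists>\<epsilon>>0. \<forall>x1 x2. sol x1 x2 \<and> x1 0 > 0 \<and> x2 0 > 0 \<longrightarrow>
        Liminf at_top (\<lambda>t. ereal (species i x1 x2 t)) \<ge> ereal \<epsilon>)"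

definition permanent :: "((real \<Rightarrow> real) \<Rightarrow> (real \<Rightarrow> real) \<Rightarrow> bool) \<Rightarrow> bool" where
  "permanent sol \<longleftrightarrow> persistent sol 1 \<and> persistent sol 2"

end

theory Submission
  imports Defs
begin

text \<open>
  All lower bounds come from one Lyapunov-type argument on the real line. If
  \<open>V = y + W\<close> with \<open>W\<close> eventually between \<open>Wlo\<close> and \<open>Whi\<close>, and \<open>V\<close> grows at a
  rate \<open>g > 0\<close> whenever \<open>y \<le> A\<close>, then \<open>y\<close> must exceed \<open>A\<close> at some time, and
  afterwards it can only drop below \<open>A\<close> while \<open>V\<close> increases; hence \<open>y\<close> eventually
  stays above \<open>A - (Whi - Wlo)\<close>. This is applied to \<open>y = ln x\<^sub>i\<close>, whose derivative
  is the per-capita growth rate, with \<open>W = -k x\<^sub>2\<close> resp. \<open>W = -k ln x\<^sub>2\<close> for the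
  host (cases \<open>d \<ge> r\<^sub>2\<close> and \<open>d < r\<^sub>2\<close>), and with \<open>W = c ln x\<^sub>1\<close> for the parasite
  once the host is known to persist and to stay eventually below \<open>K\<^sub>1 (1 + \<eta>)\<close>.
  All constants depend only on the parameters, so the bounds are uniform over solutions.
\<close>

section \<open>Drift arguments on the real line\<close>

lemma increment_ge_of_DERIV_ge:
  fixes V D :: "real \<Rightarrow> real"
  assumes "s \<le> t" "continuous_on {s..t} V"
    and "\<And>x. s < x \<Longrightarrow> x < t \<Longrightarrow> (V has_real_derivative D x) (at x)"
    and "\<And>x. s < x \<Longrightarrow> x < t \<Longrightarrow> g \<le> D x"
  shows "V s + g * (t - s) \<le> V t"
proof -
  have "V s - g * s \<le> V t - g * t"
  proof (rule DERIV_nonneg_imp_increasing_open[OF assms(1)])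
    fix x assume x: "s < x" "x < t"
    have "((\<lambda>x. V x - g * x) has_real_derivative D x - g) (at x)"
      using assms(3)[OF x] by (auto intro!: derivative_eq_intros)
    then show "\<exists>y. ((\<lambda>x. V x - g * x) has_real_derivative y) (at x) \<and> 0 \<le> y"
      using assms(4)[OF x] by auto
  qed (use assms(2) in \<open>auto intro!: continuous_intros\<close>)
  then show ?thesis
    by (simp add: algebra_simps)
qed

lemma first_hitting_time:
  fixes y :: "real \<Rightarrow> real"
  assumes cont: "continuous_on {t0..t1} y" and "t0 \<le> t1" "A < y t0" "y t1 \<le> A"
  obtains s where "t0 < s" "s \<le> t1" "y s = A" "\<And>\<tau>. t0 \<le> \<tau> \<Longrightarrow> \<tau> < s \<Longrightarrow> A < y \<tau>"
proof -
  define S where "S = {\<tau> \<in> {t0..t1}. y \<tau> \<le> A}"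
  have "closed S"
    unfolding S_def by (rule continuous_on_closed_Collect_le[OF cont continuous_on_const]) simp
  moreover have "t1 \<in> S" "bdd_below S"
    using assms unfolding S_def by (auto intro: bdd_belowI[of _ t0])
  ultimately have "Inf S \<in> S"
    using closed_contains_Inf by blast
  define s where "s = Inf S"
  have s: "t0 \<le> s" "s \<le> t1" "y s \<le> A"
    using \<open>Inf S \<in> S\<close> unfolding s_def S_def by auto
  have before: "A < y \<tau>" if "t0 \<le> \<tau>" "\<tau> < s" for \<tau>
  proof (rule ccontr)
    assume "\<not> A < y \<tau>"
    then have "\<tau> \<in> S"
      using that s unfolding S_def by auto
    then show False
      using cInf_lower[OF _ \<open>bdd_below S\<close>] that unfolding s_def by fastforce
  qed
  have "t0 < s"
    using s \<open>A < y t0\<close> by (cases "t0 = s") auto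
  have "closed {\<tau> \<in> {t0..s}. A \<le> y \<tau>}"
    by (rule continuous_on_closed_Collect_le[OF continuous_on_const continuous_on_subset[OF cont]])
       (use s in auto)
  moreover have "{t0..<s} \<subseteq> {\<tau> \<in> {t0..s}. A \<le> y \<tau>}"
    using before by (auto intro: less_imp_le)
  ultimately have "{t0..s} \<subseteq> {\<tau> \<in> {t0..s}. A \<le> y \<tau>}"
    using closure_minimal closure_atLeastLessThan[OF \<open>t0 < s\<close>] by metis
  then have "A \<le> y s"
    using \<open>t0 < s\<close> by (auto dest: subsetD[of _ _ s])
  then show ?thesis
    using that \<open>t0 < s\<close> s before by (auto intro: antisym)
qed

lemma last_hitting_time:
  fixes y :: "real \<Rightarrow> real"
  assumes cont: "continuous_on {t0..t1} y" and "t0 \<le> t1" "A \<le> y t0"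
  obtains s where "t0 \<le> s" "s \<le> t1" "A \<le> y s" "\<And>\<tau>. s < \<tau> \<Longrightarrow> \<tau> \<le> t1 \<Longrightarrow> y \<tau> < A"
proof -
  define S where "S = {\<tau> \<in> {t0..t1}. A \<le> y \<tau>}"
  have "closed S"
    unfolding S_def by (rule continuous_on_closed_Collect_le[OF continuous_on_const cont]) simp
  moreover have "t0 \<in> S" "bdd_above S"
    using assms unfolding S_def by (auto intro: bdd_aboveI[of _ t1])
  ultimately have "Sup S \<in> S"
    using closed_contains_Sup by blast
  moreover have "y \<tau> < A" if "Sup S < \<tau>" "\<tau> \<le> t1" for \<tau>
  proof (rule ccontr)
    assume "\<not> y \<tau> < A"
    then have "\<tau> \<in> S"
      using that \<open>Sup S \<in> S\<close> unfolding S_def by auto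
    then show False
      using cSup_upper[OF _ \<open>bdd_above S\<close>] that by fastforce
  qed
  ultimately show ?thesis
    using that[of "Sup S"] \<open>Sup S \<in> S\<close> unfolding S_def by simp
qed

lemma eventually_ge_of_drift:
  fixes y W D :: "real \<Rightarrow> real"
  assumes deriv: "\<forall>\<^sub>F t in at_top. ((\<lambda>t. y t + W t) has_real_derivative D t) (at t)"
    and cont: "\<forall>\<^sub>F t in at_top. isCont y t"
    and drift: "\<forall>\<^sub>F t in at_top. y t \<le> A \<longrightarrow> g \<le> D t" and "0 < g"
    and bounded: "\<forall>\<^sub>F t in at_top. Wlo \<le> W t \<and> W t \<le> Whi"
  shows "\<forall>\<^sub>F t in at_top. A - (Whi - Wlo) \<le> y t"
proof -
  define V where "V t = y t + W t" for t
  obtain T where T: "\<And>t. T \<le> t \<Longrightarrow> (V has_real_derivative D t) (at t) \<and> isCont y t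
      \<and> (y t \<le> A \<longrightarrow> g \<le> D t) \<and> Wlo \<le> W t \<and> W t \<le> Whi"
    using eventually_conj[OF deriv eventually_conj[OF cont eventually_conj[OF drift bounded]]]
    unfolding eventually_at_top_linorder V_def by blast
  have "continuous_on {T..} V" "continuous_on {T..} y"
    using T by (auto intro!: continuous_at_imp_continuous_on intro: DERIV_isCont)
  have growth: "V s + g * (t - s) \<le> V t"
    if "T \<le> s" "s \<le> t" "\<And>\<tau>. s < \<tau> \<Longrightarrow> \<tau> < t \<Longrightarrow> y \<tau> \<le> A" for s t
    by (rule increment_ge_of_DERIV_ge[OF \<open>s \<le> t\<close> continuous_on_subset[OF \<open>continuous_on {T..} V\<close>],
          where D = D]) (use that T in auto)
  have "\<exists>t0\<ge>T. A < y t0"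
  proof (rule ccontr)
    assume "\<not> ?thesis"
    then have below: "y t \<le> A" if "T \<le> t" for t
      using that by (meson not_le)
    define t where "t = T + (A + Whi - V T) / g + 1"
    have "T \<le> t"
      using below[of T] T[of T] \<open>0 < g\<close> unfolding t_def V_def by (simp add: field_simps)
    then have "V T + g * (t - T) \<le> A + Whi"
      using growth[of T t] below T[of t] unfolding V_def by force
    moreover have "g * (t - T) = A + Whi - V T + g"
      using \<open>0 < g\<close> unfolding t_def by (simp add: field_simps)
    ultimately have "g \<le> 0"
      by simp
    with \<open>0 < g\<close> show False
      by simp
  qed
  then obtain t0 where "T \<le> t0" "A < y t0"
    by blast
  have "A - (Whi - Wlo) \<le> y t" if "t0 \<le> t" for t
  proof -
    have "continuous_on {t0..t} y"
      using \<open>T \<le> t0\<close> by (auto intro: continuous_on_subset[OF \<open>continuous_on {T..} y\<close>])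
    then obtain s where s: "t0 \<le> s" "s \<le> t" "A \<le> y s"
      and after: "\<And>\<tau>. s < \<tau> \<Longrightarrow> \<tau> \<le> t \<Longrightarrow> y \<tau> < A"
      using last_hitting_time[OF _ \<open>t0 \<le> t\<close>, of y A] \<open>A < y t0\<close> by (metis less_imp_le)
    have "V s + g * (t - s) \<le> V t"
      using s after \<open>T \<le> t0\<close> by (intro growth) (auto intro: less_imp_le)
    moreover have "0 \<le> g * (t - s)"
      using \<open>0 < g\<close> s by simp
    ultimately have "V s \<le> V t"
      by linarith
    then show ?thesis
      using T[of s] T[of t] s \<open>T \<le> t0\<close> unfolding V_def by linarith
  qed
  then show ?thesis
    unfolding eventually_at_top_linorder by blast
qed

lemma ge_exp_of_growth_rate_ge:
  fixes x G :: "real \<Rightarrow> real"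
  assumes "t0 < t1" "continuous_on {t0..t1} x"
    and pos: "\<And>\<tau>. t0 \<le> \<tau> \<Longrightarrow> \<tau> < t1 \<Longrightarrow> 0 < x \<tau>"
    and deriv: "\<And>\<tau>. t0 < \<tau> \<Longrightarrow> \<tau> < t1 \<Longrightarrow> (x has_real_derivative x \<tau> * G \<tau>) (at \<tau>)"
    and rate: "\<And>\<tau>. t0 < \<tau> \<Longrightarrow> \<tau> < t1 \<Longrightarrow> -L \<le> G \<tau>"
  shows "x t0 * exp (- L * (t1 - t0)) \<le> x t1"
proof (rule tendsto_le[OF trivial_limit_at_left_real])
  show "(x \<longlongrightarrow> x t1) (at_left t1)"
    using continuous_on_Icc_at_leftD[OF assms(2,1)] .
  show "((\<lambda>\<tau>. x t0 * exp (- L * (\<tau> - t0))) \<longlongrightarrow> x t0 * exp (- L * (t1 - t0))) (at_left t1)"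
    by (intro tendsto_intros)
  have "x t0 * exp (- L * (\<tau> - t0)) \<le> x \<tau>" if "t0 \<le> \<tau>" "\<tau> < t1" for \<tau>
  proof -
    have "continuous_on {t0..\<tau>} (\<lambda>t. ln (x t))"
      using that pos by (intro continuous_intros continuous_on_subset[OF assms(2)]) force+
    moreover have "((\<lambda>t. ln (x t)) has_real_derivative G s) (at s)" if "t0 < s" "s < t1" for s
      using deriv[OF that] pos[of s] that by (auto intro!: derivative_eq_intros)
    ultimately have "ln (x t0) + - L * (\<tau> - t0) \<le> ln (x \<tau>)"
      using rate \<open>\<tau> < t1\<close> by (intro increment_ge_of_DERIV_ge[OF \<open>t0 \<le> \<tau>\<close>, where D = G]) auto
    then have "exp (ln (x t0) + - L * (\<tau> - t0)) \<le> x \<tau>"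
      using pos that by (simp add: ln_ge_iff)
    moreover have "exp (ln (x t0) + - L * (\<tau> - t0)) = x t0 * exp (- L * (\<tau> - t0))"
      unfolding exp_add using pos[of t0] that by simp
    ultimately show ?thesis
      by simp
  qed
  then show "\<forall>\<^sub>F \<tau> in at_left t1. x t0 * exp (- L * (\<tau> - t0)) \<le> x \<tau>"
    by (intro eventually_mono[OF eventually_at_left_real[OF \<open>t0 < t1\<close>]]) auto
qed

lemma eventually_ge_of_log_drift:
  fixes x W G :: "real \<Rightarrow> real"
  assumes pos: "\<forall>\<^sub>F t in at_top. 0 < x t"
    and deriv: "\<forall>\<^sub>F t in at_top. ((\<lambda>t. ln (x t) + W t) has_real_derivative G t) (at t)"
    and cont: "\<forall>\<^sub>F t in at_top. isCont x t"
    and drift: "\<forall>\<^sub>F t in at_top. x t \<le> \<delta> \<longrightarrow> g \<le> G t" and "0 < g" "0 < \<delta>"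
    and bounded: "\<forall>\<^sub>F t in at_top. Wlo \<le> W t \<and> W t \<le> Whi"
  shows "\<forall>\<^sub>F t in at_top. \<delta> * exp (Wlo - Whi) \<le> x t"
proof -
  have "\<forall>\<^sub>F t in at_top. ln \<delta> - (Whi - Wlo) \<le> ln (x t)"
  proof (rule eventually_ge_of_drift[OF deriv _ _ \<open>0 < g\<close> bounded])
    show "\<forall>\<^sub>F t in at_top. isCont (\<lambda>t. ln (x t)) t"
      using pos cont by eventually_elim (auto intro: continuous_intros)
    show "\<forall>\<^sub>F t in at_top. ln (x t) \<le> ln \<delta> \<longrightarrow> g \<le> G t"
      using pos drift by eventually_elim (use \<open>0 < \<delta>\<close> in auto)
  qed
  then show ?thesis
    using pos
  proof eventually_elim
    case (elim t)
    have "\<delta> * exp (Wlo - Whi) = exp (ln \<delta> - (Whi - Wlo))"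
      using \<open>0 < \<delta>\<close> by (simp add: exp_diff)
    also have "\<dots> \<le> x t"
      using elim by (simp add: ln_ge_iff)
    finally show ?case .
  qed
qed

lemma eventually_le_of_log_drift:
  fixes x G :: "real \<Rightarrow> real"
  assumes pos: "\<forall>\<^sub>F t in at_top. 0 < x t"
    and deriv: "\<forall>\<^sub>F t in at_top. ((\<lambda>t. ln (x t)) has_real_derivative G t) (at t)"
    and drift: "\<forall>\<^sub>F t in at_top. M \<le> x t \<longrightarrow> G t \<le> - g" and "0 < g" "0 < M"
  shows "\<forall>\<^sub>F t in at_top. x t \<le> M"
proof -
  have "\<forall>\<^sub>F t in at_top. - ln M - (0 - 0) \<le> - ln (x t)"
  proof (rule eventually_ge_of_drift[where W = "\<lambda>_. 0" and D = "\<lambda>t. - G t"])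
    show "\<forall>\<^sub>F t in at_top. ((\<lambda>t. - ln (x t) + 0) has_real_derivative - G t) (at t)"
      using deriv by eventually_elim (simp add: DERIV_minus)
    show "\<forall>\<^sub>F t in at_top. isCont (\<lambda>t. - ln (x t)) t"
      using deriv by eventually_elim (auto intro: continuous_intros DERIV_isCont)
    show "\<forall>\<^sub>F t in at_top. - ln (x t) \<le> - ln M \<longrightarrow> g \<le> - G t"
      using pos drift by eventually_elim (use \<open>0 < M\<close> in auto)
  qed (use \<open>0 < g\<close> in auto)
  then show ?thesis
    using pos by eventually_elim (use \<open>0 < M\<close> in auto)
qed

section \<open>Per-capita growth rates\<close>

lemma divide_one_plus_le:
  fixes c z :: real
  assumes "0 \<le> c" "0 \<le> z"
  shows "c / (1 + z) \<le> c"
  using assms by (simp add: divide_le_eq mult_le_cancel_left1)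

locale host_parasite =
  fixes r1 r2 K1 K2 a h e d :: real
  assumes r1: "0 < r1" and r2: "0 < r2" and K1: "0 < K1" and K2: "0 < K2"
    and a: "0 < a" and h: "0 < h" and e: "0 < e" and d: "0 \<le> d"
begin

definition host_rate :: "real \<Rightarrow> real \<Rightarrow> real" where
  "host_rate u v = r1 * (1 - u / K1) - a * v / (1 + h * a * u)"

definition parasite_rate :: "real \<Rightarrow> real \<Rightarrow> real" where
  "parasite_rate u v = e * a * u / (1 + h * a * u) - d + r2 * (1 - v / K2)"

definition gain_at_capacity :: real where
  "gain_at_capacity = e * a * K1 / (1 + a * h * K1)"

definition parasite_cap :: real where
  "parasite_cap = K2 * (r2 + e / h + 1) / r2"

lemma gain_at_capacity_pos: "0 < gain_at_capacity"
  unfolding gain_at_capacity_def using K1 a h e by (simp add: add_pos_pos)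

lemma parasite_cap_pos: "0 < parasite_cap"
  unfolding parasite_cap_def using r2 K2 e h by (simp add: add_pos_pos)

lemma response_le_saturation:
  assumes "0 \<le> u"
  shows "e * a * u / (1 + h * a * u) \<le> e / h"
proof -
  have "e * a * u \<le> e / h * (1 + h * a * u)"
    using h e by (simp add: algebra_simps)
  then show ?thesis
    using assms h a by (simp add: divide_le_eq add_pos_nonneg)
qed

lemma response_plus_scaled_logistic_ge:
  assumes "0 \<le> u" "u \<le> K1 * (1 + \<eta>)" "0 \<le> \<eta>"
  shows "gain_at_capacity * (1 - \<eta>) \<le> e * a * u / (1 + h * a * u) + gain_at_capacity * (1 - u / K1)"
proof (cases "u \<le> K1")
  case True
  have "gain_at_capacity * (u / K1) = e * a * u / (1 + a * h * K1)"
    unfolding gain_at_capacity_def using K1 by (simp add: field_simps)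
  also have "\<dots> \<le> e * a * u / (1 + h * a * u)"
    using True assms(1) a h e K1 by (intro divide_left_mono) (auto simp: mult_left_mono add_pos_nonneg)
  finally have "gain_at_capacity * (u / K1) \<le> e * a * u / (1 + h * a * u)" .
  moreover have "0 \<le> gain_at_capacity * \<eta>"
    using gain_at_capacity_pos assms(3) by simp
  ultimately show ?thesis
    by (simp add: algebra_simps)
next
  case False
  have "gain_at_capacity * (1 + h * a * u) \<le> e * a * u"
  proof -
    have "e * a * K1 * (1 + h * a * u) \<le> e * a * u * (1 + a * h * K1)"
      using False a e by (simp add: algebra_simps)
    then show ?thesis
      unfolding gain_at_capacity_def using a h K1 by (simp add: divide_le_eq add_pos_pos mult.commute)
  qed
  then have "gain_at_capacity \<le> e * a * u / (1 + h * a * u)"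
    using assms(1) a h by (simp add: le_divide_eq add_pos_nonneg)
  moreover have "gain_at_capacity * (u / K1) \<le> gain_at_capacity * (1 + \<eta>)"
    using assms(2) K1 gain_at_capacity_pos by (intro mult_left_mono) (auto simp: divide_le_eq mult.commute)
  ultimately show ?thesis
    by (simp add: algebra_simps)
qed

lemma host_rate_le:
  assumes "0 \<le> \<eta>" "K1 * (1 + \<eta>) \<le> u" "0 \<le> v"
  shows "host_rate u v \<le> - (r1 * \<eta>)"
proof -
  have "0 \<le> K1 * (1 + \<eta>)"
    using assms(1) K1 by simp
  then have "0 \<le> u"
    using assms(2) by linarith
  then have "0 \<le> a * v / (1 + h * a * u)"
    using assms(3) a h by (simp add: add_pos_nonneg)
  moreover have "r1 * (1 + \<eta>) \<le> r1 * (u / K1)"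
    using assms(2) K1 r1 by (intro mult_left_mono) (auto simp: le_divide_eq mult.commute)
  ultimately show ?thesis
    unfolding host_rate_def by (simp add: algebra_simps)
qed

lemma parasite_rate_le:
  assumes "0 \<le> u" "parasite_cap \<le> v"
  shows "parasite_rate u v \<le> -1"
proof -
  have "r2 + e / h + 1 \<le> r2 * (v / K2)"
    using assms(2) r2 K2 unfolding parasite_cap_def by (simp add: field_simps)
  then show ?thesis
    using response_le_saturation[OF assms(1)] d unfolding parasite_rate_def by (simp add: algebra_simps)
qed

lemma parasite_rate_ge:
  assumes "0 \<le> u"
  shows "r2 - d - r2 * v / K2 \<le> parasite_rate u v"
  using assms a h e unfolding parasite_rate_def by (simp add: add_pos_nonneg algebra_simps)

lemma host_rate_minus_parasite_flux_ge:
  assumes "r2 \<le> d" "0 \<le> u" "u \<le> K1 / 4" "0 \<le> v"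
    and "0 \<le> k" and k: "4 * a^2 * K2 \<le> k * r1 * r2" "k * e * u \<le> 1"
  shows "r1 / 2 \<le> host_rate u v - k * v * parasite_rate u v"
proof -
  have host: "3 * r1 / 4 - a * v \<le> host_rate u v"
  proof -
    have "r1 * (u / K1) \<le> r1 / 4"
      using assms(3) K1 r1 by (simp add: divide_le_eq)
    moreover have "a * v / (1 + h * a * u) \<le> a * v"
      using assms a h by (intro divide_one_plus_le) auto
    moreover have "host_rate u v = r1 - r1 * (u / K1) - a * v / (1 + h * a * u)"
      unfolding host_rate_def by (simp add: algebra_simps)
    ultimately show ?thesis
      by linarith
  qed
  have parasite: "k * v * parasite_rate u v \<le> a * v - 4 * a^2 / r1 * v^2"
  proof -
    have "e * a * u / (1 + h * a * u) \<le> e * a * u"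
      using assms a h e by (intro divide_one_plus_le) auto
    then have "parasite_rate u v \<le> e * a * u - r2 * v / K2"
      using assms(1) unfolding parasite_rate_def by (simp add: algebra_simps)
    then have "k * v * parasite_rate u v \<le> k * v * (e * a * u - r2 * v / K2)"
      using \<open>0 \<le> k\<close> assms(4) by (intro mult_left_mono) auto
    also have "\<dots> = a * v * (k * e * u) - (k * r1 * r2) / (r1 * K2) * v^2"
      using r1 K2 by (simp add: field_simps power2_eq_square)
    also have "\<dots> \<le> a * v * 1 - (4 * a^2 * K2) / (r1 * K2) * v^2"
      using k assms(4) a r1 K2
      by (intro diff_mono mult_left_mono mult_right_mono divide_right_mono) auto
    finally show ?thesis
      using K2 by simp
  qed
  have "r1 / 4 - 2 * a * v + 4 * a^2 / r1 * v^2 = (r1 / 2 - 2 * a * v)^2 / r1"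
    using r1 by (simp add: field_simps power2_eq_square)
  then have "0 \<le> r1 / 4 - 2 * a * v + 4 * a^2 / r1 * v^2"
    using r1 by simp
  then show ?thesis
    using host parasite by simp
qed

lemma host_rate_minus_parasite_rate_ge:
  assumes "0 \<le> u" "0 \<le> v"
  shows "r1 - a * K2 * (1 - d / r2) - u * (r1 / K1 + e * a^2 * K2 / r2)
    \<le> host_rate u v - a * K2 / r2 * parasite_rate u v"
proof -
  define k where "k = a * K2 / r2"
  define D where "D = 1 + h * a * u"
  have "0 < k"
    unfolding k_def using a K2 r2 by simp
  have "host_rate u v - k * parasite_rate u v
      = r1 - r1 * (u / K1) - a * v / D - k * (e * a * u / D) - k * (r2 - d) + k * r2 * (v / K2)"
    unfolding host_rate_def parasite_rate_def D_def by (simp add: algebra_simps)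
  moreover have "a * v / D \<le> a * v" "e * a * u / D \<le> e * a * u"
    unfolding D_def using assms a h e by (auto intro: divide_one_plus_le)
  moreover have "k * (e * a * u / D) \<le> k * (e * a * u)"
    using calculation(3) \<open>0 < k\<close> by (intro mult_left_mono) auto
  moreover have "k * r2 * (v / K2) = a * v" "k * (r2 - d) = a * K2 * (1 - d / r2)"
      "k * (e * a * u) = u * (e * a^2 * K2 / r2)" "r1 * (u / K1) = u * (r1 / K1)"
    unfolding k_def using r2 K2 by (simp_all add: field_simps power2_eq_square)
  ultimately show ?thesis
    unfolding k_def[symmetric] by (simp add: algebra_simps)
qed

lemma parasite_rate_plus_host_rate_ge:
  assumes "0 \<le> u" "u \<le> K1 * (1 + \<eta>)" "0 \<le> \<eta>" "0 \<le> v"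
  shows "gain_at_capacity * (1 - \<eta>) + r2 - d - v * (r2 / K2 + gain_at_capacity / r1 * a)
    \<le> parasite_rate u v + gain_at_capacity / r1 * host_rate u v"
proof -
  have "a * v / (1 + h * a * u) \<le> a * v"
    using assms a h by (intro divide_one_plus_le) auto
  then have "gain_at_capacity / r1 * (a * v / (1 + h * a * u)) \<le> gain_at_capacity / r1 * (a * v)"
    using gain_at_capacity_pos r1 by (intro mult_left_mono) auto
  moreover have "gain_at_capacity / r1 * (r1 * (1 - u / K1)) = gain_at_capacity * (1 - u / K1)"
    using r1 by simp
  ultimately show ?thesis
    using response_plus_scaled_logistic_ge[OF assms(1-3)] r1 unfolding host_rate_def parasite_rate_def
    by (simp add: algebra_simps)
qed

end

section \<open>Positive solutions\<close>

locale hp_trajectory = host_parasite +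
  fixes x1 x2 :: "real \<Rightarrow> real"
  assumes solution: "hp_solution r1 r2 K1 K2 a h e d x1 x2"
    and host_initial: "0 < x1 0" and parasite_initial: "0 < x2 0"
begin

lemma host_DERIV_within:
  "0 \<le> t \<Longrightarrow> (x1 has_real_derivative x1 t * host_rate (x1 t) (x2 t)) (at t within {0..})"
  using solution unfolding hp_solution_def host_rate_def by auto

lemma parasite_DERIV_within:
  "0 \<le> t \<Longrightarrow> (x2 has_real_derivative x2 t * parasite_rate (x1 t) (x2 t)) (at t within {0..})"
  using solution unfolding hp_solution_def parasite_rate_def by auto

lemma at_within_nonneg: "0 < t \<Longrightarrow> at t within {0::real..} = at t"
  by (rule at_within_interior) (simp add: interior_Ici[of "-1"])

lemma host_DERIV: "0 < t \<Longrightarrow> (x1 has_real_derivative x1 t * host_rate (x1 t) (x2 t)) (at t)"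
  using host_DERIV_within[of t] at_within_nonneg[of t] by simp

lemma parasite_DERIV: "0 < t \<Longrightarrow> (x2 has_real_derivative x2 t * parasite_rate (x1 t) (x2 t)) (at t)"
  using parasite_DERIV_within[of t] at_within_nonneg[of t] by simp

lemma continuous_on_host: "continuous_on {0..} x1"
  using host_DERIV_within
  by (auto simp: continuous_on_eq_continuous_within intro: DERIV_continuous)

lemma continuous_on_parasite: "continuous_on {0..} x2"
  using parasite_DERIV_within
  by (auto simp: continuous_on_eq_continuous_within intro: DERIV_continuous)

lemma continuous_on_rates:
  assumes "S \<subseteq> {0..}" "\<And>t. t \<in> S \<Longrightarrow> 0 \<le> x1 t"
  shows "continuous_on S (\<lambda>t. host_rate (x1 t) (x2 t))"
    and "continuous_on S (\<lambda>t. parasite_rate (x1 t) (x2 t))"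
proof -
  have "continuous_on S x1" "continuous_on S x2"
    using assms(1) continuous_on_host continuous_on_parasite by (auto intro: continuous_on_subset)
  moreover have "1 + h * a * x1 t \<noteq> 0" if "t \<in> S" for t
  proof -
    have "0 \<le> h * a * x1 t"
      using assms(2)[OF that] h a by simp
    then show ?thesis
      by linarith
  qed
  ultimately show "continuous_on S (\<lambda>t. host_rate (x1 t) (x2 t))"
      "continuous_on S (\<lambda>t. parasite_rate (x1 t) (x2 t))"
    unfolding host_rate_def parasite_rate_def using K1 K2 by (auto intro!: continuous_intros)
qed

lemma rates_bounded_below:
  assumes "0 \<le> s" "\<And>\<tau>. \<tau> \<in> {0..s} \<Longrightarrow> 0 \<le> x1 \<tau>"
  obtains L where
    "\<And>\<tau>. \<tau> \<in> {0..s} \<Longrightarrow> - L \<le> host_rate (x1 \<tau>) (x2 \<tau>) \<and> - L \<le> parasite_rate (x1 \<tau>) (x2 \<tau>)"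
proof -
  define G where "G \<tau> = min (host_rate (x1 \<tau>) (x2 \<tau>)) (parasite_rate (x1 \<tau>) (x2 \<tau>))" for \<tau>
  have "continuous_on {0..s} G"
    unfolding G_def using continuous_on_rates[of "{0..s}"] assms(2) by (auto intro!: continuous_intros)
  then obtain \<tau>0 where "\<forall>\<tau>\<in>{0..s}. G \<tau>0 \<le> G \<tau>"
    using continuous_attains_inf[of "{0..s}" G] assms(1) by fastforce
  then show ?thesis
    by (intro that[of "- G \<tau>0"]) (auto simp: G_def)
qed

lemma positive:
  assumes "0 \<le> t"
  shows "0 < x1 t \<and> 0 < x2 t"
proof (rule ccontr)
  assume "\<not> (0 < x1 t \<and> 0 < x2 t)"
  define z where "z \<tau> = min (x1 \<tau>) (x2 \<tau>)" for \<tau>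
  have "continuous_on {0..t} z"
    unfolding z_def using continuous_on_host continuous_on_parasite
    by (auto intro!: continuous_intros intro: continuous_on_subset)
  moreover have "0 < z 0" "z t \<le> 0"
    unfolding z_def using host_initial parasite_initial \<open>\<not> (0 < x1 t \<and> 0 < x2 t)\<close> by auto
  ultimately obtain s where s: "0 < s" "s \<le> t" "z s = 0"
    and before: "\<And>\<tau>. 0 \<le> \<tau> \<Longrightarrow> \<tau> < s \<Longrightarrow> 0 < z \<tau>"
    using first_hitting_time[of 0 t z 0] assms by blast
  \<comment> \<open>Up to the first zero of \<open>z\<close> the rates stay bounded, so neither population can reach 0.\<close>
  have "0 \<le> x1 \<tau>" if "\<tau> \<in> {0..s}" for \<tau>
    using before[of \<tau>] s that unfolding z_def by (cases "\<tau> = s") auto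
  then obtain L where L:
    "\<And>\<tau>. \<tau> \<in> {0..s} \<Longrightarrow> - L \<le> host_rate (x1 \<tau>) (x2 \<tau>) \<and> - L \<le> parasite_rate (x1 \<tau>) (x2 \<tau>)"
    using rates_bounded_below \<open>0 < s\<close> by (metis less_imp_le)
  have "0 < x1 0 * exp (- L * (s - 0))" "0 < x2 0 * exp (- L * (s - 0))"
    using host_initial parasite_initial by simp_all
  moreover have "x1 0 * exp (- L * (s - 0)) \<le> x1 s"
    using before host_DERIV L s(2) unfolding z_def
    by (intro ge_exp_of_growth_rate_ge[OF \<open>0 < s\<close>]) (auto intro: continuous_on_subset[OF continuous_on_host])
  moreover have "x2 0 * exp (- L * (s - 0)) \<le> x2 s"
    using before parasite_DERIV L s(2) unfolding z_def
    by (intro ge_exp_of_growth_rate_ge[OF \<open>0 < s\<close>])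
      (auto intro: continuous_on_subset[OF continuous_on_parasite])
  ultimately have "0 < z s"
    unfolding z_def by simp
  then show False
    using \<open>z s = 0\<close> by simp
qed

lemma host_pos: "0 \<le> t \<Longrightarrow> 0 < x1 t"
  and parasite_pos: "0 \<le> t \<Longrightarrow> 0 < x2 t"
  using positive by auto

lemma ln_host_DERIV: "0 < t \<Longrightarrow> ((\<lambda>t. ln (x1 t)) has_real_derivative host_rate (x1 t) (x2 t)) (at t)"
  using host_DERIV[of t] host_pos[of t] by (auto intro!: derivative_eq_intros)

lemma ln_parasite_DERIV:
  "0 < t \<Longrightarrow> ((\<lambda>t. ln (x2 t)) has_real_derivative parasite_rate (x1 t) (x2 t)) (at t)"
  using parasite_DERIV[of t] parasite_pos[of t] by (auto intro!: derivative_eq_intros)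

lemma eventually_pos: "\<forall>\<^sub>F t in at_top. 0 < x1 t \<and> 0 < x2 t"
  using eventually_ge_at_top[of 0] by eventually_elim (simp add: positive)

lemma eventually_isCont: "\<forall>\<^sub>F t in at_top. isCont x1 t \<and> isCont x2 t"
  using eventually_gt_at_top[of 0]
  by eventually_elim (auto intro: DERIV_isCont host_DERIV parasite_DERIV)

lemma eventually_host_le:
  assumes "0 < \<eta>"
  shows "\<forall>\<^sub>F t in at_top. x1 t \<le> K1 * (1 + \<eta>)"
proof (rule eventually_le_of_log_drift)
  show "\<forall>\<^sub>F t in at_top. 0 < x1 t"
    using eventually_pos by eventually_elim simp
  show "\<forall>\<^sub>F t in at_top. ((\<lambda>t. ln (x1 t)) has_real_derivative host_rate (x1 t) (x2 t)) (at t)"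
    using eventually_gt_at_top[of 0] by eventually_elim (rule ln_host_DERIV)
  show "\<forall>\<^sub>F t in at_top. K1 * (1 + \<eta>) \<le> x1 t \<longrightarrow> host_rate (x1 t) (x2 t) \<le> - (r1 * \<eta>)"
    using eventually_pos by eventually_elim (use assms in \<open>auto intro: host_rate_le\<close>)
qed (use assms r1 K1 in auto)

lemma eventually_parasite_le_cap: "\<forall>\<^sub>F t in at_top. x2 t \<le> parasite_cap"
proof (rule eventually_le_of_log_drift)
  show "\<forall>\<^sub>F t in at_top. 0 < x2 t"
    using eventually_pos by eventually_elim simp
  show "\<forall>\<^sub>F t in at_top. ((\<lambda>t. ln (x2 t)) has_real_derivative parasite_rate (x1 t) (x2 t)) (at t)"
    using eventually_gt_at_top[of 0] by eventually_elim (rule ln_parasite_DERIV)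
  show "\<forall>\<^sub>F t in at_top. parasite_cap \<le> x2 t \<longrightarrow> parasite_rate (x1 t) (x2 t) \<le> - 1"
    using eventually_pos by eventually_elim (auto intro: parasite_rate_le)
qed (use parasite_cap_pos in auto)

lemma eventually_parasite_ge_if_d_lt_r2:
  assumes "d < r2"
  shows "\<forall>\<^sub>F t in at_top. K2 * (1 - d / r2) / 2 \<le> x2 t"
proof -
  define m where "m = K2 * (1 - d / r2) / 2"
  have "0 < m"
    unfolding m_def using assms r2 K2 by simp
  have "\<forall>\<^sub>F t in at_top. m * exp (0 - 0) \<le> x2 t"
  proof (rule eventually_ge_of_log_drift[where W = "\<lambda>_. 0"])
    show "\<forall>\<^sub>F t in at_top. 0 < x2 t" "\<forall>\<^sub>F t in at_top. isCont x2 t"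
      using eventually_pos eventually_isCont by (auto elim: eventually_mono)
    show "\<forall>\<^sub>F t in at_top. ((\<lambda>t. ln (x2 t) + 0) has_real_derivative parasite_rate (x1 t) (x2 t)) (at t)"
      using eventually_gt_at_top[of 0] by eventually_elim (simp add: ln_parasite_DERIV)
    show "\<forall>\<^sub>F t in at_top. x2 t \<le> m \<longrightarrow> (r2 - d) / 2 \<le> parasite_rate (x1 t) (x2 t)"
    proof (rule eventually_mono[OF eventually_pos], intro impI)
      fix t assume t: "0 < x1 t \<and> 0 < x2 t" "x2 t \<le> m"
      have "r2 * x2 t / K2 \<le> (r2 - d) / 2"
        using t(2) r2 K2 unfolding m_def by (simp add: field_simps)
      moreover have "r2 - d - r2 * x2 t / K2 \<le> parasite_rate (x1 t) (x2 t)"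
        using t(1) by (intro parasite_rate_ge) simp
      ultimately show "(r2 - d) / 2 \<le> parasite_rate (x1 t) (x2 t)"
        by argo
    qed
  qed (use assms \<open>0 < m\<close> in auto)
  then show ?thesis
    unfolding m_def by simp
qed

lemma eventually_host_ge_if_r2_le_d:
  assumes "r2 \<le> d" "0 < \<delta>" "\<delta> \<le> K1 / 4"
    and "0 \<le> k" "4 * a^2 * K2 \<le> k * r1 * r2" "k * e * \<delta> \<le> 1"
  shows "\<forall>\<^sub>F t in at_top. \<delta> * exp (- k * parasite_cap) \<le> x1 t"
proof -
  have "\<forall>\<^sub>F t in at_top. \<delta> * exp (- k * parasite_cap - 0) \<le> x1 t"
  proof (rule eventually_ge_of_log_drift[where W = "\<lambda>t. - k * x2 t"])
    show "\<forall>\<^sub>F t in at_top. 0 < x1 t" "\<forall>\<^sub>F t in at_top. isCont x1 t"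
      using eventually_pos eventually_isCont by (auto elim: eventually_mono)
    show "\<forall>\<^sub>F t in at_top. ((\<lambda>t. ln (x1 t) + - k * x2 t) has_real_derivative
        host_rate (x1 t) (x2 t) - k * x2 t * parasite_rate (x1 t) (x2 t)) (at t)"
      using eventually_gt_at_top[of 0] by eventually_elim
        (rule DERIV_cong[OF DERIV_add[OF ln_host_DERIV DERIV_cmult[OF parasite_DERIV]]], auto)
    show "\<forall>\<^sub>F t in at_top. x1 t \<le> \<delta> \<longrightarrow>
        r1 / 2 \<le> host_rate (x1 t) (x2 t) - k * x2 t * parasite_rate (x1 t) (x2 t)"
    proof (rule eventually_mono[OF eventually_pos], intro impI)
      fix t assume t: "0 < x1 t \<and> 0 < x2 t" "x1 t \<le> \<delta>"
      have "k * e * x1 t \<le> k * e * \<delta>"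
        using t(2) \<open>0 \<le> k\<close> e by (intro mult_left_mono) auto
      then show "r1 / 2 \<le> host_rate (x1 t) (x2 t) - k * x2 t * parasite_rate (x1 t) (x2 t)"
        using t assms by (intro host_rate_minus_parasite_flux_ge) auto
    qed
    show "\<forall>\<^sub>F t in at_top. - k * parasite_cap \<le> - k * x2 t \<and> - k * x2 t \<le> 0"
      using eventually_pos eventually_parasite_le_cap
      by eventually_elim (use \<open>0 \<le> k\<close> in \<open>auto intro: mult_left_mono\<close>)
  qed (use assms r1 in auto)
  then show ?thesis
    by simp
qed

lemma eventually_host_ge_if_d_lt_r2:
  assumes "d < r2" "0 < \<delta>"
    and "\<delta> * (r1 / K1 + e * a^2 * K2 / r2) \<le> (r1 - a * K2 * (1 - d / r2)) / 2"
  shows "\<forall>\<^sub>F t in at_top.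
    \<delta> * exp (a * K2 / r2 * (ln (K2 * (1 - d / r2) / 2) - ln parasite_cap)) \<le> x1 t"
proof -
  define k where "k = a * K2 / r2"
  define m where "m = K2 * (1 - d / r2) / 2"
  define gap where "gap = r1 - a * K2 * (1 - d / r2)"
  have "0 < k" "0 < m"
    unfolding k_def m_def using assms(1) a K2 r2 by simp_all
  have "0 < \<delta> * (r1 / K1 + e * a^2 * K2 / r2)"
    using assms(2) r1 K1 e a K2 r2 by (simp add: add_pos_pos)
  then have "0 < gap"
    using assms(3) unfolding gap_def[symmetric] by linarith
  have "\<forall>\<^sub>F t in at_top. \<delta> * exp (- k * ln parasite_cap - - k * ln m) \<le> x1 t"
  proof (rule eventually_ge_of_log_drift[where W = "\<lambda>t. - k * ln (x2 t)"])
    show "\<forall>\<^sub>F t in at_top. 0 < x1 t" "\<forall>\<^sub>F t in at_top. isCont x1 t"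
      using eventually_pos eventually_isCont by (auto elim: eventually_mono)
    show "\<forall>\<^sub>F t in at_top. ((\<lambda>t. ln (x1 t) + - k * ln (x2 t)) has_real_derivative
        host_rate (x1 t) (x2 t) - k * parasite_rate (x1 t) (x2 t)) (at t)"
      using eventually_gt_at_top[of 0] by eventually_elim
        (rule DERIV_cong[OF DERIV_add[OF ln_host_DERIV DERIV_cmult[OF ln_parasite_DERIV]]], auto)
    show "\<forall>\<^sub>F t in at_top. x1 t \<le> \<delta> \<longrightarrow>
        gap / 2 \<le> host_rate (x1 t) (x2 t) - k * parasite_rate (x1 t) (x2 t)"
    proof (rule eventually_mono[OF eventually_pos], intro impI)
      fix t assume t: "0 < x1 t \<and> 0 < x2 t" "x1 t \<le> \<delta>"
      have "x1 t * (r1 / K1 + e * a^2 * K2 / r2) \<le> \<delta> * (r1 / K1 + e * a^2 * K2 / r2)"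
        using t(2) r1 K1 e a K2 r2 by (intro mult_right_mono) auto
      moreover have "gap - x1 t * (r1 / K1 + e * a^2 * K2 / r2)
          \<le> host_rate (x1 t) (x2 t) - k * parasite_rate (x1 t) (x2 t)"
        unfolding gap_def k_def using t(1) by (intro host_rate_minus_parasite_rate_ge) auto
      ultimately show "gap / 2 \<le> host_rate (x1 t) (x2 t) - k * parasite_rate (x1 t) (x2 t)"
        using assms(3) unfolding gap_def[symmetric] by linarith
    qed
    show "\<forall>\<^sub>F t in at_top. - k * ln parasite_cap \<le> - k * ln (x2 t) \<and> - k * ln (x2 t) \<le> - k * ln m"
      using eventually_pos eventually_parasite_le_cap eventually_parasite_ge_if_d_lt_r2[OF assms(1)]
      by eventually_elim (use \<open>0 < k\<close> \<open>0 < m\<close> in \<open>auto simp: m_def\<close>)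
  qed (use assms(2) \<open>0 < gap\<close> in auto)
  then show ?thesis
    unfolding k_def m_def by (simp add: algebra_simps)
qed

lemma eventually_parasite_ge_if_host_ge:
  assumes "0 < m" "\<forall>\<^sub>F t in at_top. m \<le> x1 t"
    and "0 < \<eta>" "gain_at_capacity * \<eta> \<le> (gain_at_capacity + r2 - d) / 2"
    and "0 < \<delta>" "\<delta> * (r2 / K2 + gain_at_capacity / r1 * a) \<le> (gain_at_capacity + r2 - d) / 4"
  shows "\<forall>\<^sub>F t in at_top.
    \<delta> * exp (gain_at_capacity / r1 * (ln m - ln (K1 * (1 + \<eta>)))) \<le> x2 t"
proof -
  define c where "c = gain_at_capacity / r1"
  define \<sigma> where "\<sigma> = gain_at_capacity + r2 - d"
  have "0 < c"
    unfolding c_def using gain_at_capacity_pos r1 by simp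
  have "0 < gain_at_capacity * \<eta>"
    using assms(3) gain_at_capacity_pos by simp
  have "\<forall>\<^sub>F t in at_top. \<delta> * exp (c * ln m - c * ln (K1 * (1 + \<eta>))) \<le> x2 t"
  proof (rule eventually_ge_of_log_drift[where W = "\<lambda>t. c * ln (x1 t)"])
    show "\<forall>\<^sub>F t in at_top. 0 < x2 t" "\<forall>\<^sub>F t in at_top. isCont x2 t"
      using eventually_pos eventually_isCont by (auto elim: eventually_mono)
    show "\<forall>\<^sub>F t in at_top. ((\<lambda>t. ln (x2 t) + c * ln (x1 t)) has_real_derivative
        parasite_rate (x1 t) (x2 t) + c * host_rate (x1 t) (x2 t)) (at t)"
      using eventually_gt_at_top[of 0] by eventually_elim
        (rule DERIV_add[OF ln_parasite_DERIV DERIV_cmult[OF ln_host_DERIV]], auto)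
    show "\<forall>\<^sub>F t in at_top. x2 t \<le> \<delta> \<longrightarrow>
        (gain_at_capacity + r2 - d) / 4 \<le> parasite_rate (x1 t) (x2 t) + c * host_rate (x1 t) (x2 t)"
      using eventually_pos eventually_host_le[OF assms(3)]
    proof eventually_elim
      case (elim t)
      show ?case
      proof
        assume "x2 t \<le> \<delta>"
        then have "x2 t * (r2 / K2 + c * a) \<le> \<delta> * (r2 / K2 + c * a)"
          using \<open>0 < c\<close> r2 K2 a by (intro mult_right_mono) auto
        moreover have "gain_at_capacity * (1 - \<eta>) + r2 - d - x2 t * (r2 / K2 + c * a)
            \<le> parasite_rate (x1 t) (x2 t) + c * host_rate (x1 t) (x2 t)"
          unfolding c_def using elim assms(3) by (intro parasite_rate_plus_host_rate_ge) auto
        moreover have "gain_at_capacity * (1 - \<eta>) + r2 - d = \<sigma> - gain_at_capacity * \<eta>"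
          unfolding \<sigma>_def by (simp add: algebra_simps)
        ultimately show "(gain_at_capacity + r2 - d) / 4
            \<le> parasite_rate (x1 t) (x2 t) + c * host_rate (x1 t) (x2 t)"
          using assms(4,6) unfolding c_def[symmetric] \<sigma>_def[symmetric] by linarith
      qed
    qed
    show "\<forall>\<^sub>F t in at_top. c * ln m \<le> c * ln (x1 t) \<and> c * ln (x1 t) \<le> c * ln (K1 * (1 + \<eta>))"
      using eventually_pos assms(2) eventually_host_le[OF assms(3)]
      by eventually_elim (use \<open>0 < c\<close> \<open>0 < m\<close> in auto)
  qed (use assms(5) \<open>0 < gain_at_capacity * \<eta>\<close> assms(4) in auto)
  then show ?thesis
    unfolding c_def by (simp add: algebra_simps)
qed

end

section \<open>Uniform persistence\<close>

context host_parasite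
begin

lemma hp_trajectoryI:
  "hp_solution r1 r2 K1 K2 a h e d x1 x2 \<Longrightarrow> 0 < x1 0 \<Longrightarrow> 0 < x2 0
    \<Longrightarrow> hp_trajectory r1 r2 K1 K2 a h e d x1 x2"
  by (intro hp_trajectory.intro host_parasite_axioms hp_trajectory_axioms.intro)

lemma persistentI:
  assumes "0 < m"
    and "\<And>x1 x2. hp_trajectory r1 r2 K1 K2 a h e d x1 x2
      \<Longrightarrow> \<forall>\<^sub>F t in at_top. m \<le> species i x1 x2 t"
  shows "persistent (hp_solution r1 r2 K1 K2 a h e d) i"
  unfolding persistent_def
proof (intro exI[of _ m] conjI allI impI)
  fix x1 x2
  assume "hp_solution r1 r2 K1 K2 a h e d x1 x2 \<and> 0 < x1 0 \<and> 0 < x2 0"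
  then have "\<forall>\<^sub>F t in at_top. ereal m \<le> ereal (species i x1 x2 t)"
    using assms(2) hp_trajectoryI by simp
  then show "ereal m \<le> Liminf at_top (\<lambda>t. ereal (species i x1 x2 t))"
    by (rule Liminf_bounded)
qed (fact assms(1))

lemma uniform_host_bound_if_r2_le_d:
  assumes "r2 \<le> d"
  obtains m where "0 < m"
    "\<And>x1 x2. hp_trajectory r1 r2 K1 K2 a h e d x1 x2 \<Longrightarrow> \<forall>\<^sub>F t in at_top. m \<le> x1 t"
proof -
  define k where "k = 4 * a^2 * K2 / (r1 * r2)"
  define \<delta> where "\<delta> = min (K1 / 4) (1 / (k * e))"
  have "0 < k" "4 * a^2 * K2 = k * r1 * r2"
    unfolding k_def using a K2 r1 r2 by simp_all
  moreover have "0 < \<delta>" "\<delta> \<le> K1 / 4" "k * e * \<delta> \<le> 1"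
    unfolding \<delta>_def using \<open>0 < k\<close> K1 e by (auto simp: min_def field_simps)
  ultimately show ?thesis
    using hp_trajectory.eventually_host_ge_if_r2_le_d[OF _ assms]
    by (intro that[of "\<delta> * exp (- k * parasite_cap)"]) auto
qed

lemma uniform_host_bound_if_d_lt_r2:
  assumes "d < r2" "a * K2 * (1 - d / r2) < r1"
  obtains m where "0 < m"
    "\<And>x1 x2. hp_trajectory r1 r2 K1 K2 a h e d x1 x2 \<Longrightarrow> \<forall>\<^sub>F t in at_top. m \<le> x1 t"
proof -
  define S where "S = r1 / K1 + e * a^2 * K2 / r2"
  define \<delta> where "\<delta> = (r1 - a * K2 * (1 - d / r2)) / (2 * S)"
  have "0 < S"
    unfolding S_def using r1 K1 e a K2 r2 by (simp add: add_pos_pos)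
  then have "0 < \<delta>" "\<delta> * S \<le> (r1 - a * K2 * (1 - d / r2)) / 2"
    unfolding \<delta>_def using assms(2) by simp_all
  then show ?thesis
    using hp_trajectory.eventually_host_ge_if_d_lt_r2[OF _ assms(1)] unfolding S_def
    by (intro that[of "\<delta> * exp (a * K2 / r2 * (ln (K2 * (1 - d / r2) / 2) - ln parasite_cap))"])
      auto
qed

lemma uniform_parasite_bound_if_host_bound:
  assumes "0 < m1"
    and host_bound: "\<And>x1 x2. hp_trajectory r1 r2 K1 K2 a h e d x1 x2 \<Longrightarrow> \<forall>\<^sub>F t in at_top. m1 \<le> x1 t"
    and "d < r2 + gain_at_capacity"
  obtains m where "0 < m"
    "\<And>x1 x2. hp_trajectory r1 r2 K1 K2 a h e d x1 x2 \<Longrightarrow> \<forall>\<^sub>F t in at_top. m \<le> x2 t"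
proof -
  define \<sigma> where "\<sigma> = gain_at_capacity + r2 - d"
  define S where "S = r2 / K2 + gain_at_capacity / r1 * a"
  define \<eta> where "\<eta> = \<sigma> / (2 * gain_at_capacity)"
  define \<delta> where "\<delta> = \<sigma> / (4 * S)"
  have "0 < \<sigma>" "0 < S"
    unfolding \<sigma>_def S_def using assms(3) r2 K2 r1 a gain_at_capacity_pos by (auto simp: add_pos_pos)
  then have "0 < \<eta>" "gain_at_capacity * \<eta> \<le> \<sigma> / 2" "0 < \<delta>" "\<delta> * S \<le> \<sigma> / 4"
    unfolding \<eta>_def \<delta>_def using gain_at_capacity_pos by simp_all
  then show ?thesis
    using hp_trajectory.eventually_parasite_ge_if_host_ge[OF _ \<open>0 < m1\<close> host_bound]
    unfolding \<sigma>_def S_def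
    by (intro that[of "\<delta> * exp (gain_at_capacity / r1 * (ln m1 - ln (K1 * (1 + \<eta>))))"]) auto
qed

lemma host_persistent:
  assumes "r2 < d \<or> (K2 * (1 - d / r2) < r1 / a \<and> 0 < K2 * (1 - d / r2))"
  shows "persistent (hp_solution r1 r2 K1 K2 a h e d) 1"
proof (cases "r2 \<le> d")
  case True
  then obtain m where "0 < m"
    "\<And>x1 x2. hp_trajectory r1 r2 K1 K2 a h e d x1 x2 \<Longrightarrow> \<forall>\<^sub>F t in at_top. m \<le> x1 t"
    by (rule uniform_host_bound_if_r2_le_d) blast
  then show ?thesis
    by (intro persistentI[of m]) (auto simp: species_def)
next
  case False
  then have "d < r2" "a * K2 * (1 - d / r2) < r1"
    using assms a by (simp_all add: less_divide_eq ac_simps)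
  then obtain m where "0 < m"
    "\<And>x1 x2. hp_trajectory r1 r2 K1 K2 a h e d x1 x2 \<Longrightarrow> \<forall>\<^sub>F t in at_top. m \<le> x1 t"
    by (rule uniform_host_bound_if_d_lt_r2) blast
  then show ?thesis
    by (intro persistentI[of m]) (auto simp: species_def)
qed

lemma parasite_persistent:
  assumes "d < r2 + gain_at_capacity"
  shows "persistent (hp_solution r1 r2 K1 K2 a h e d) 2"
proof (cases "r2 \<le> d")
  case True
  obtain m1 where "0 < m1"
    "\<And>x1 x2. hp_trajectory r1 r2 K1 K2 a h e d x1 x2 \<Longrightarrow> \<forall>\<^sub>F t in at_top. m1 \<le> x1 t"
    using uniform_host_bound_if_r2_le_d[OF True] by blast
  then obtain m where "0 < m"
    "\<And>x1 x2. hp_trajectory r1 r2 K1 K2 a h e d x1 x2 \<Longrightarrow> \<forall>\<^sub>F t in at_top. m \<le> x2 t"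
    using uniform_parasite_bound_if_host_bound assms by blast
  then show ?thesis
    by (intro persistentI[of m]) (auto simp: species_def)
next
  case False
  then show ?thesis
    using r2 K2 hp_trajectory.eventually_parasite_ge_if_d_lt_r2
    by (intro persistentI[of "K2 * (1 - d / r2) / 2"]) (auto simp: species_def)
qed

end

theorem theorem1:
  fixes r1 r2 K1 K2 a h e d :: real
  assumes "r1 > 0" "r2 > 0" "K1 > 0" "K2 > 0" "a > 0" "h > 0" "e > 0" "d \<ge> 0"
  defines "sol \<equiv> hp_solution r1 r2 K1 K2 a h e d"
  shows "(d > r2 \<or> (r1 / a > K2 * (1 - d / r2) \<and> K2 * (1 - d / r2) > 0)
            \<longrightarrow> persistent sol 1)
       \<and> (r2 + e * a * K1 / (1 + a * h * K1) > d \<longrightarrow> persistent sol 2)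
       \<and> ((r2 + e * a * K1 / (1 + a * h * K1) > d \<and> d > r2) \<or>
            (r1 / a > K2 * (1 - d / r2) \<and> K2 * (1 - d / r2) > 0)
            \<longrightarrow> permanent sol)"
proof -
  interpret host_parasite r1 r2 K1 K2 a h e d
    using assms by unfold_locales
  have gain: "e * a * K1 / (1 + a * h * K1) = gain_at_capacity"
    by (simp add: gain_at_capacity_def)
  have "d < r2 + gain_at_capacity" if "0 < K2 * (1 - d / r2)"
    using that K2 r2 gain_at_capacity_pos by (simp add: zero_less_mult_iff field_simps)
  then show ?thesis
    unfolding sol_def permanent_def gain
    using host_persistent parasite_persistent by (auto simp: add.commute)
qed

end
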